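(* Let $T$ be dependent and $\kappa$ regular $>|T|$. Assume $N\prec\mathfrak C$ is $\kappa$-saturated, $A\subseteq\mathfrak C$ with $|A|<\kappa$, for every finite tuple $\bar a$ from $A$ the type $\mathrm{tp}(\bar a,N)$ belongs to $\mathbf S^{\mathrm{nsp},<\omega}_{\ge\kappa}(N)$, and the structure $N_{[A]}$ has elimination of quantifiers. Then $N_{[A]}$ is $\kappa$-saturated.
   Context: $T$ is a complete first-order theory, $\mathfrak C$ its monster model; types computed in $\mathfrak C$. A type $p$ does not split over $B$ if whenever $\varphi(\bar x,\bar b),\neg\varphi(\bar x,\bar c)\in p$ then $\mathrm{tp}(\bar b,B)\ne\mathrm{tp}(\bar c,B)$. Complete types $p,q$ over $A$ are weakly orthogonal if for all realizations $\bar a_1,\bar a_2$ of $p$ and $\bar b_1,\bar b_2$ of $q$, $\mathrm{tp}(\bar a_1{}^\frown\bar b_1,A)=\mathrm{tp}(\bar a_2{}^\frown\bar b_2,A)$. $\mathbf S^{\mathrm{nsp}}_{<\kappa}(N)$ is the set of complete finitary types over $N$ not splitting over some subset of $N$ of size $<\kappa$; $\mathbf S^{\mathrm{nsp},<\omega}_{\ge\kappa}(N)$ is the set of complete finitary types over $N$ weakly orthogonal to every member of $\mathbf S^{\mathrm{nsp}}_{<\kappa}(N)$. $N_{[A]}$ is $N$ expanded by a relation $R_{\varphi(\bar x,\bar b)}=\{\bar a\in{}^{\ell g(\bar x)}N:\mathfrak C\models\varphi[\bar a,\bar b]\}$ for each formula $\varphi(\bar x,\bar y)$ and $\bar b$ from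 $A$. *)

theory Defs
  imports Main
begin

datatype 'f trm = Var nat | Fn 'f "'f trm list"

datatype ('f, 'r) fm =
    FF
  | Eq "'f trm" "'f trm"
  | Rel 'r "'f trm list"
  | Neg "('f, 'r) fm"
  | Conj "('f, 'r) fm" "('f, 'r) fm"
  | Ex nat "('f, 'r) fm"

record ('f, 'r) lang =
  Fs :: "'f set"
  Rs :: "'r set"
  af :: "'f \<Rightarrow> nat"
  ar :: "'r \<Rightarrow> nat"

record ('u, 'f, 'r) struc =
  univ :: "'u set"
  fn :: "'f \<Rightarrow> 'u list \<Rightarrow> 'u"
  rl :: "'r \<Rightarrow> 'u list \<Rightarrow> bool"

fun wf_trm :: "('f, 'r) lang \<Rightarrow> 'f trm \<Rightarrow> bool" where
  "wf_trm L (Var i) = True"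
| "wf_trm L (Fn f ts) = (f \<in> Fs L \<and> length ts = af L f \<and> (\<forall>t\<in>set ts. wf_trm L t))"

fun wf :: "('f, 'r) lang \<Rightarrow> ('f, 'r) fm \<Rightarrow> bool" where
  "wf L FF = True"
| "wf L (Eq s t) = (wf_trm L s \<and> wf_trm L t)"
| "wf L (Rel r ts) = (r \<in> Rs L \<and> length ts = ar L r \<and> (\<forall>t\<in>set ts. wf_trm L t))"
| "wf L (Neg \<phi>) = wf L \<phi>"
| "wf L (Conj \<phi> \<psi>) = (wf L \<phi> \<and> wf L \<psi>)"
| "wf L (Ex x \<phi>) = wf L \<phi>"

fun fv_trm :: "'f trm \<Rightarrow> nat set" where
  "fv_trm (Var i) = {i}"
| "fv_trm (Fn f ts) = (\<Union>t\<in>set ts. fv_trm t)"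

fun fv :: "('f, 'r) fm \<Rightarrow> nat set" where
  "fv FF = {}"
| "fv (Eq s t) = fv_trm s \<union> fv_trm t"
| "fv (Rel r ts) = (\<Union>t\<in>set ts. fv_trm t)"
| "fv (Neg \<phi>) = fv \<phi>"
| "fv (Conj \<phi> \<psi>) = fv \<phi> \<union> fv \<psi>"
| "fv (Ex x \<phi>) = fv \<phi> - {x}"

fun qfree :: "('f, 'r) fm \<Rightarrow> bool" where
  "qfree FF = True"
| "qfree (Eq s t) = True"
| "qfree (Rel r ts) = True"
| "qfree (Neg \<phi>) = qfree \<phi>"
| "qfree (Conj \<phi> \<psi>) = (qfree \<phi> \<and> qfree \<psi>)"
| "qfree (Ex x \<phi>) = False"

fun teval :: "('u, 'f, 'r, 'z) struc_scheme \<Rightarrow> (nat \<Rightarrow> 'u) \<Rightarrow> 'f trm \<Rightarrow> 'u" where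
  "teval M e (Var i) = e i"
| "teval M e (Fn f ts) = fn M f (map (teval M e) ts)"

fun sat :: "('u, 'f, 'r, 'z) struc_scheme \<Rightarrow> (nat \<Rightarrow> 'u) \<Rightarrow> ('f, 'r) fm \<Rightarrow> bool" where
  "sat M e FF = False"
| "sat M e (Eq s t) = (teval M e s = teval M e t)"
| "sat M e (Rel r ts) = rl M r (map (teval M e) ts)"
| "sat M e (Neg \<phi>) = (\<not> sat M e \<phi>)"
| "sat M e (Conj \<phi> \<psi>) = (sat M e \<phi> \<and> sat M e \<psi>)"
| "sat M e (Ex x \<phi>) = (\<exists>a\<in>univ M. sat M (e(x := a)) \<phi>)"

text \<open>M |= phi[xs], variable i interpreted as the i-th entry of xs
  (only used when fv phi is contained in {..<length xs}).\<close>
definition holds :: "('u, 'f, 'r) struc \<Rightarrow> ('f, 'r) fm \<Rightarrow> 'u list \<Rightarrow> bool" where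
  "holds M \<phi> xs = sat M (\<lambda>i. xs ! i) \<phi>"

definition is_struct :: "('f, 'r) lang \<Rightarrow> ('u, 'f, 'r) struc \<Rightarrow> bool" where
  "is_struct L M \<longleftrightarrow> univ M \<noteq> {} \<and>
     (\<forall>f\<in>Fs L. \<forall>xs\<in>lists (univ M). length xs = af L f \<longrightarrow> fn M f xs \<in> univ M)"

definition elem_sub :: "('f, 'r) lang \<Rightarrow> ('u, 'f, 'r) struc \<Rightarrow> ('u, 'f, 'r) struc \<Rightarrow> bool" where
  "elem_sub L N M \<longleftrightarrow> is_struct L N \<and> univ N \<subseteq> univ M \<and>
     (\<forall>\<phi> xs. wf L \<phi> \<and> xs \<in> lists (univ N) \<and> fv \<phi> \<subseteq> {..<length xs} \<longrightarrow>
        (holds N \<phi> xs \<longleftrightarrow> holds M \<phi> xs))"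

text \<open>tp(xs, B) computed in M: formulas phi(xbar, ybar) with parameters ds from B
  (variables 0..length xs - 1 are xbar, the following ones are the parameters).\<close>
definition tp :: "('f, 'r) lang \<Rightarrow> ('u, 'f, 'r) struc \<Rightarrow> 'u list \<Rightarrow> 'u set
      \<Rightarrow> (('f, 'r) fm \<times> 'u list) set" where
  "tp L M xs B = {(\<phi>, ds). wf L \<phi> \<and> ds \<in> lists B \<and> fv \<phi> \<subseteq> {..<length xs + length ds}
                          \<and> holds M \<phi> (xs @ ds)}"

definition saturated :: "('f, 'r) lang \<Rightarrow> ('u, 'f, 'r) struc \<Rightarrow> 'k rel \<Rightarrow> bool" where
  "saturated L M \<kappa> \<longleftrightarrow>
    (\<forall>B p. B \<subseteq> univ M \<and> ordLess2 (card_of B) \<kappa> \<and>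
       (\<forall>(\<phi>, ds)\<in>p. wf L \<phi> \<and> ds \<in> lists B \<and> fv \<phi> \<subseteq> {..<Suc (length ds)}) \<and>
       (\<forall>q. finite q \<and> q \<subseteq> p \<longrightarrow> (\<exists>a\<in>univ M. \<forall>(\<phi>, ds)\<in>q. holds M \<phi> (a # ds)))
     \<longrightarrow> (\<exists>a\<in>univ M. \<forall>(\<phi>, ds)\<in>p. holds M \<phi> (a # ds)))"

definition automorphism :: "('f, 'r) lang \<Rightarrow> ('u, 'f, 'r) struc \<Rightarrow> ('u \<Rightarrow> 'u) \<Rightarrow> bool" where
  "automorphism L M g \<longleftrightarrow> bij_betw g (univ M) (univ M) \<and>
     (\<forall>f\<in>Fs L. \<forall>xs\<in>lists (univ M). length xs = af L f \<longrightarrow> g (fn M f xs) = fn M f (map g xs)) \<and>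
     (\<forall>r\<in>Rs L. \<forall>xs\<in>lists (univ M). length xs = ar L r \<longrightarrow> (rl M r (map g xs) \<longleftrightarrow> rl M r xs))"

definition strongly_homogeneous :: "('f, 'r) lang \<Rightarrow> ('u, 'f, 'r) struc \<Rightarrow> 'k rel \<Rightarrow> bool" where
  "strongly_homogeneous L M \<mu> \<longleftrightarrow>
    (\<forall>D h. D \<subseteq> univ M \<and> h ` D \<subseteq> univ M \<and> ordLess2 (card_of D) \<mu> \<and>
       (\<forall>\<phi> xs. wf L \<phi> \<and> xs \<in> lists D \<and> fv \<phi> \<subseteq> {..<length xs} \<longrightarrow>
          (holds M \<phi> xs \<longleftrightarrow> holds M \<phi> (map h xs)))
     \<longrightarrow> (\<exists>g. automorphism L M g \<and> (\<forall>x\<in>D. g x = h x)))"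

definition monster :: "('f, 'r) lang \<Rightarrow> ('u, 'f, 'r) struc \<Rightarrow> 'k rel \<Rightarrow> bool" where
  "monster L C \<mu> \<longleftrightarrow> is_struct L C \<and> Card_order \<mu> \<and> ordLess2 (card_of {\<phi>. wf L \<phi>}) \<mu> \<and>
     saturated L C \<mu> \<and> strongly_homogeneous L C \<mu>"

definition dependent :: "('f, 'r) lang \<Rightarrow> ('u, 'f, 'r) struc \<Rightarrow> bool" where
  "dependent L C \<longleftrightarrow>
    (\<forall>\<phi> n m. wf L \<phi> \<and> fv \<phi> \<subseteq> {..<n + m} \<longrightarrow>
      \<not> (\<exists>a :: nat \<Rightarrow> 'u list. \<exists>b :: nat set \<Rightarrow> 'u list.
            (\<forall>i. a i \<in> lists (univ C) \<and> length (a i) = n) \<and>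
            (\<forall>w. b w \<in> lists (univ C) \<and> length (b w) = m) \<and>
            (\<forall>i w. holds C \<phi> (a i @ b w) \<longleftrightarrow> i \<in> w)))"

definition does_not_split ::
  "('f, 'r) lang \<Rightarrow> ('u, 'f, 'r) struc \<Rightarrow> (('f, 'r) fm \<times> 'u list) set \<Rightarrow> 'u set \<Rightarrow> bool" where
  "does_not_split L C p B \<longleftrightarrow>
    (\<forall>\<phi> bs cs. (\<phi>, bs) \<in> p \<and> (Neg \<phi>, cs) \<in> p \<longrightarrow> tp L C bs B \<noteq> tp L C cs B)"

definition S_types :: "('f, 'r) lang \<Rightarrow> ('u, 'f, 'r) struc \<Rightarrow> 'u set
      \<Rightarrow> (('f, 'r) fm \<times> 'u list) set set" where
  "S_types L C B = {tp L C as B | as. as \<in> lists (univ C)}"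

definition weakly_orthogonal :: "('f, 'r) lang \<Rightarrow> ('u, 'f, 'r) struc \<Rightarrow> 'u set
      \<Rightarrow> (('f, 'r) fm \<times> 'u list) set \<Rightarrow> (('f, 'r) fm \<times> 'u list) set \<Rightarrow> bool" where
  "weakly_orthogonal L C B p q \<longleftrightarrow>
    (\<forall>a1\<in>lists (univ C). \<forall>a2\<in>lists (univ C). \<forall>b1\<in>lists (univ C). \<forall>b2\<in>lists (univ C).
       tp L C a1 B = p \<and> tp L C a2 B = p \<and> tp L C b1 B = q \<and> tp L C b2 B = q \<longrightarrow>
       tp L C (a1 @ b1) B = tp L C (a2 @ b2) B)"

definition S_nsp_lt :: "('f, 'r) lang \<Rightarrow> ('u, 'f, 'r) struc \<Rightarrow> ('u, 'f, 'r) struc \<Rightarrow> 'k rel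
      \<Rightarrow> (('f, 'r) fm \<times> 'u list) set set" where
  "S_nsp_lt L C N \<kappa> = {p \<in> S_types L C (univ N).
      \<exists>B. B \<subseteq> univ N \<and> ordLess2 (card_of B) \<kappa> \<and> does_not_split L C p B}"

definition S_nsp_ge :: "('f, 'r) lang \<Rightarrow> ('u, 'f, 'r) struc \<Rightarrow> ('u, 'f, 'r) struc \<Rightarrow> 'k rel
      \<Rightarrow> (('f, 'r) fm \<times> 'u list) set set" where
  "S_nsp_ge L C N \<kappa> = {p \<in> S_types L C (univ N).
      \<forall>q\<in>S_nsp_lt L C N \<kappa>. weakly_orthogonal L C (univ N) p q}"

text \<open>Relation symbol Inr (phi, n, bs) stands for R_{phi(xbar, bs)} with lg(xbar) = n.\<close>
definition expL :: "('f, 'r) lang \<Rightarrow> 'u set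
      \<Rightarrow> ('f, 'r + (('f, 'r) fm \<times> nat \<times> 'u list)) lang" where
  "expL L A = \<lparr> Fs = Fs L,
     Rs = Inl ` Rs L \<union> Inr ` {(\<phi>, n, bs). wf L \<phi> \<and> bs \<in> lists A \<and> fv \<phi> \<subseteq> {..<n + length bs}},
     af = af L,
     ar = case_sum (ar L) (\<lambda>(\<phi>, n, bs). n) \<rparr>"

definition expN :: "('u, 'f, 'r) struc \<Rightarrow> ('u, 'f, 'r) struc
      \<Rightarrow> ('u, 'f, 'r + (('f, 'r) fm \<times> nat \<times> 'u list)) struc" where
  "expN C N = \<lparr> univ = univ N, fn = fn N,
     rl = case_sum (rl N) (\<lambda>(\<phi>, n, bs) as. holds C \<phi> (as @ bs)) \<rparr>"

definition has_qe :: "('f, 'r) lang \<Rightarrow> ('u, 'f, 'r) struc \<Rightarrow> bool" where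
  "has_qe L M \<longleftrightarrow>
    (\<forall>\<phi>. wf L \<phi> \<longrightarrow> (\<exists>\<psi>. wf L \<psi> \<and> qfree \<psi> \<and> fv \<psi> \<subseteq> fv \<phi> \<and>
        (\<forall>e. (\<forall>i. e i \<in> univ M) \<longrightarrow> (sat M e \<phi> \<longleftrightarrow> sat M e \<psi>))))"

end

theory Submission
  imports Defs
begin

text \<open>By quantifier elimination every formula of \<open>N\<^sub>[\<^sub>A\<^sub>]\<close> is equivalent on \<open>N\<close> to an
  \<open>L\<close>-formula \<open>\<theta>(x, d, a)\<close> with extra parameters \<open>a\<close> from \<open>A\<close>. So a small type \<open>p\<close> of
  \<open>N\<^sub>[\<^sub>A\<^sub>]\<close>, finitely satisfiable in \<open>N\<close>, becomes a small set of such \<open>\<theta>\<close>'s, finitely satisfiable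
  in \<open>N\<close>. Choosing a witness in \<open>N\<close> for each finite part gives a small \<open>M \<subseteq> N\<close>, and by saturation
  of the monster some \<open>c\<close> realizes all the \<open>\<theta>\<close>'s while \<open>tp(c/N)\<close> is finitely satisfiable in \<open>M\<close>,
  hence does not split over \<open>M\<close>. By weak orthogonality, \<open>tp(c/N)\<close> alone decides each
  \<open>\<theta>(x, d, a)\<close>, so by compactness a finite part of \<open>tp(c/N)\<close> implies it. The union of these finite
  parts is a small type over \<open>N\<close>, realized in \<open>N\<close> by \<open>\<kappa>\<close>-saturation, and any realization
  realizes \<open>p\<close>.\<close>

context
  includes cardinal_syntax
begin

subsection \<open>Coincidence and renaming of variables\<close>

lemma teval_cong: "\<forall>i\<in>fv_trm t. e i = e' i \<Longrightarrow> teval M e t = teval M e' t"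
proof (induction t)
  case (Fn f ts)
  then have "map (teval M e) ts = map (teval M e') ts" by auto
  then show ?case by (simp del: map_eq_conv)
qed simp

lemma sat_cong: "\<forall>i\<in>fv \<phi>. e i = e' i \<Longrightarrow> sat M e \<phi> = sat M e' \<phi>"
proof (induction \<phi> arbitrary: e e')
  case (Eq s t)
  then show ?case using teval_cong[of s e e' M] teval_cong[of t e e' M] by simp
next
  case (Rel r ts)
  then have "map (teval M e) ts = map (teval M e') ts"
    by (auto intro!: teval_cong)
  then show ?case by (simp del: map_eq_conv)
next
  case (Ex x \<phi>)
  then have "sat M (e(x := a)) \<phi> = sat M (e'(x := a)) \<phi>" for a
    by (intro Ex.IH) auto
  then show ?case by simp
next
  case (Conj \<phi> \<psi>)
  then show ?case by (metis UnCI fv.simps(5) sat.simps(5))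
qed auto

lemma holds_cong: "\<forall>i\<in>fv \<phi>. ys ! i = xs ! i \<Longrightarrow> holds M \<phi> ys = holds M \<phi> xs"
  unfolding holds_def by (rule sat_cong)

fun rename_trm :: "(nat \<Rightarrow> nat) \<Rightarrow> 'f trm \<Rightarrow> 'f trm" where
  "rename_trm \<rho> (Var i) = Var (\<rho> i)"
| "rename_trm \<rho> (Fn f ts) = Fn f (map (rename_trm \<rho>) ts)"

fun rename :: "(nat \<Rightarrow> nat) \<Rightarrow> ('f, 'r) fm \<Rightarrow> ('f, 'r) fm" where
  "rename \<rho> FF = FF"
| "rename \<rho> (Eq s t) = Eq (rename_trm \<rho> s) (rename_trm \<rho> t)"
| "rename \<rho> (Rel r ts) = Rel r (map (rename_trm \<rho>) ts)"
| "rename \<rho> (Neg \<phi>) = Neg (rename \<rho> \<phi>)"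
| "rename \<rho> (Conj \<phi> \<psi>) = Conj (rename \<rho> \<phi>) (rename \<rho> \<psi>)"
| "rename \<rho> (Ex x \<phi>) = Ex (\<rho> x) (rename \<rho> \<phi>)"

lemma teval_rename_trm: "teval M e (rename_trm \<rho> t) = teval M (e \<circ> \<rho>) t"
proof (induction t)
  case (Fn f ts)
  then have "map (teval M e \<circ> rename_trm \<rho>) ts = map (teval M (e \<circ> \<rho>)) ts"
    by (auto simp: comp_def)
  then show ?case by (simp del: map_eq_conv add: comp_def)
qed simp

lemma wf_trm_rename_trm: "wf_trm L (rename_trm \<rho> t) = wf_trm L t"
  by (induction t) auto

lemma fv_trm_rename_trm: "fv_trm (rename_trm \<rho> t) = \<rho> ` fv_trm t"
  by (induction t) auto

lemma wf_rename: "wf L (rename \<rho> \<phi>) = wf L \<phi>"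
  by (induction \<phi>) (auto simp: wf_trm_rename_trm)

lemma fv_rename: "inj \<rho> \<Longrightarrow> fv (rename \<rho> \<phi>) = \<rho> ` fv \<phi>"
  by (induction \<phi>) (auto simp: fv_trm_rename_trm image_set_diff image_UN)

lemma sat_rename: "inj \<rho> \<Longrightarrow> sat M e (rename \<rho> \<phi>) = sat M (e \<circ> \<rho>) \<phi>"
proof (induction \<phi> arbitrary: e)
  case (Ex x \<phi>)
  have "(e(\<rho> x := a)) \<circ> \<rho> = (e \<circ> \<rho>)(x := a)" for a
    using Ex.prems by (auto simp: fun_eq_iff inj_eq)
  then show ?case using Ex.IH[OF Ex.prems] by (simp only: rename.simps sat.simps)
qed (auto simp: teval_rename_trm comp_def)

lemma holds_rename:
  assumes "inj \<rho>" and "\<And>i. i \<in> fv \<phi> \<Longrightarrow> ys ! \<rho> i = xs ! i"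
  shows "holds M (rename \<rho> \<phi>) ys = holds M \<phi> xs"
  unfolding holds_def using assms by (simp add: sat_rename) (rule sat_cong, simp)

fun let_terms :: "nat \<Rightarrow> 'f trm list \<Rightarrow> ('f, 'r) fm \<Rightarrow> ('f, 'r) fm" where
  "let_terms Y [] \<phi> = \<phi>"
| "let_terms Y (t # ts) \<phi> = Ex Y (Conj (Eq (Var Y) t) (let_terms (Suc Y) ts \<phi>))"

lemma sat_let_terms:
  assumes "\<forall>t\<in>set ts. fv_trm t \<subseteq> {..<Y} \<and> teval M e t \<in> univ M"
  shows "sat M e (let_terms Y ts \<phi>) =
    sat M (\<lambda>z. if Y \<le> z \<and> z < Y + length ts then teval M e (ts ! (z - Y)) else e z) \<phi>"
  using assms
proof (induction ts arbitrary: Y e)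
  case Nil
  show ?case by (simp add: not_le[symmetric])
next
  case (Cons t ts)
  let ?e1 = "e(Y := teval M e t)"
  have same: "teval M (e(Y := a)) t' = teval M e t'" if "t' \<in> set (t # ts)" for a t'
    using Cons.prems that by (intro teval_cong) auto
  have "sat M e (let_terms Y (t # ts) \<phi>) = sat M ?e1 (let_terms (Suc Y) ts \<phi>)"
    using Cons.prems same[of t] by force
  also have "\<dots> = sat M (\<lambda>z. if Suc Y \<le> z \<and> z < Suc Y + length ts
      then teval M ?e1 (ts ! (z - Suc Y)) else ?e1 z) \<phi>"
  proof (rule Cons.IH, intro ballI conjI)
    fix t' assume "t' \<in> set ts"
    then show "fv_trm t' \<subseteq> {..<Suc Y}" and "teval M ?e1 t' \<in> univ M"
      using Cons.prems same[of t'] by fastforce+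
  qed
  also have "(\<lambda>z. if Suc Y \<le> z \<and> z < Suc Y + length ts then teval M ?e1 (ts ! (z - Suc Y)) else ?e1 z)
     = (\<lambda>z. if Y \<le> z \<and> z < Y + length (t # ts) then teval M e ((t # ts) ! (z - Y)) else e z)"
    using same by (auto simp: fun_eq_iff nth_Cons' Suc_diff_Suc)
  finally show ?case .
qed

lemma fv_let_terms: "fv (let_terms Y ts \<phi>) \<subseteq> (\<Union>t\<in>set ts. fv_trm t) \<union> (fv \<phi> - {Y..<Y + length ts})"
  by (induction ts arbitrary: Y) fastforce+

lemma wf_let_terms: "wf L (let_terms Y ts \<phi>) = ((\<forall>t\<in>set ts. wf_trm L t) \<and> wf L \<phi>)"
  by (induction ts arbitrary: Y) auto

lemma elem_sub_holds:
  assumes "elem_sub L N C" "wf L \<phi>" "xs \<in> lists (univ N)" "fv \<phi> \<subseteq> {..<length xs}"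
  shows "holds N \<phi> xs = holds C \<phi> xs"
  using assms unfolding elem_sub_def by blast

lemma elem_sub_fn:
  fixes L :: "('f, 'r) lang"
  assumes es: "elem_sub L N C" and f: "f \<in> Fs L" and xs: "xs \<in> lists (univ N)" "length xs = af L f"
  shows "fn N f xs = fn C f xs"
proof -
  let ?\<phi> = "Eq (Fn f (map Var [0..<length xs])) (Var (length xs)) :: ('f, 'r) fm"
  let ?ys = "xs @ [fn N f xs]"
  have vars: "map (\<lambda>i. ?ys ! i) [0..<length xs] = xs"
    by (rule nth_equalityI) (auto simp: nth_append)
  have "fn N f xs \<in> univ N"
    using es f xs unfolding elem_sub_def is_struct_def by auto
  then have "holds N ?\<phi> ?ys = holds C ?\<phi> ?ys"
    using es f xs by (intro elem_sub_holds) auto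
  then show ?thesis unfolding holds_def using vars by (simp add: comp_def)
qed

lemma elem_sub_rl:
  fixes L :: "('f, 'r) lang"
  assumes es: "elem_sub L N C" and r: "r \<in> Rs L" and xs: "xs \<in> lists (univ N)" "length xs = ar L r"
  shows "rl N r xs = rl C r xs"
proof -
  let ?\<phi> = "Rel r (map Var [0..<length xs]) :: ('f, 'r) fm"
  have "holds N ?\<phi> xs = holds C ?\<phi> xs"
    using es r xs by (intro elem_sub_holds) auto
  then show ?thesis unfolding holds_def by (simp add: comp_def map_nth)
qed

lemma elem_sub_teval:
  assumes es: "elem_sub L N C"
  shows "wf_trm L t \<Longrightarrow> \<forall>i\<in>fv_trm t. e i \<in> univ N \<Longrightarrow>
    teval N e t = teval C e t \<and> teval N e t \<in> univ N"
proof (induction t)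
  case (Fn f ts)
  have IH: "teval C e t = teval N e t \<and> teval N e t \<in> univ N" if "t \<in> set ts" for t
    using Fn.IH[OF that] Fn.prems that by auto
  have args: "map (teval N e) ts \<in> lists (univ N)" "map (teval N e) ts = map (teval C e) ts"
    using IH by (auto simp del: map_eq_conv intro!: map_cong)
  have "fn N f (map (teval N e) ts) = fn C f (map (teval N e) ts)"
    using Fn.prems args by (intro elem_sub_fn[OF es]) auto
  moreover have "fn N f (map (teval N e) ts) \<in> univ N"
    using es Fn.prems(1) args(1) unfolding elem_sub_def is_struct_def
    by (metis length_map wf_trm.simps(2))
  ultimately show ?case using args(2) by (simp del: map_eq_conv)
qed simp

lemma elem_sub_teval_args:
  assumes "elem_sub L N C" and "\<forall>t\<in>set ts. wf_trm L t \<and> (\<forall>i\<in>fv_trm t. e i \<in> univ N)"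
  shows "map (teval N e) ts = map (teval C e) ts" and "map (teval N e) ts \<in> lists (univ N)"
proof -
  have IH: "teval C e t = teval N e t \<and> teval N e t \<in> univ N" if "t \<in> set ts" for t
    using elem_sub_teval[OF assms(1), of t e] assms(2) that by metis
  then show "map (teval N e) ts = map (teval C e) ts" and "map (teval N e) ts \<in> lists (univ N)"
    by (auto simp del: map_eq_conv intro!: map_cong)
qed

subsection \<open>The expansion \<open>N\<^sub>[\<^sub>A\<^sub>]\<close>\<close>

lemma univ_expN [simp]: "univ (expN C N) = univ N"
  by (simp add: expN_def)

lemma teval_expN [simp]: "teval (expN C N) = teval N"
proof (intro ext)
  show "teval (expN C N) e t = teval N e t" for e t
    by (induction t) (auto simp: expN_def cong: map_cong)
qed

lemma rl_expN [simp]: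
  "rl (expN C N) (Inl r) = rl N r"
  "rl (expN C N) (Inr (\<phi>, n, bs)) xs = holds C \<phi> (xs @ bs)"
  by (simp_all add: expN_def)

lemma wf_trm_expL [simp]: "wf_trm (expL L A) t = wf_trm L t"
  by (induction t) (auto simp: expL_def)

definition atom_vars :: "nat \<Rightarrow> nat \<Rightarrow> nat \<Rightarrow> nat \<Rightarrow> nat" where
  "atom_vars off n k j = (if n \<le> j \<and> j < n + k then off + (j - n) else off + k + j)"

lemma inj_atom_vars: "inj (atom_vars off n k)"
  unfolding inj_def atom_vars_def by auto

text \<open>Translation of a quantifier-free formula of the expanded language into an \<open>L\<close>-formula
  together with the list of parameters from \<open>A\<close> it uses; these parameters are expected as the
  values of the variables \<open>off, off + 1, \<dots>\<close>. An atom \<open>R\<^bsub>\<phi>(x\<^sub>1 \<dots> x\<^sub>n, bs)\<^esub>(ts)\<close> becomes \<open>\<phi>\<close>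
  with \<open>bs\<close> moved to the next free parameter slots and the \<open>x\<^sub>i\<close> bound to the terms \<open>ts\<close>.\<close>

fun translate_qf :: "nat \<Rightarrow> ('f, 'r + (('f, 'r) fm \<times> nat \<times> 'u list)) fm \<Rightarrow> ('f, 'r) fm \<times> 'u list" where
  "translate_qf off FF = (FF, [])"
| "translate_qf off (Eq s t) = (Eq s t, [])"
| "translate_qf off (Rel (Inl r) ts) = (Rel r ts, [])"
| "translate_qf off (Rel (Inr (\<phi>, n, bs)) ts) =
    (let_terms (off + length bs) ts (rename (atom_vars off n (length bs)) \<phi>), bs)"
| "translate_qf off (Neg \<phi>) = (Neg (fst (translate_qf off \<phi>)), snd (translate_qf off \<phi>))"
| "translate_qf off (Conj \<phi> \<psi>) =
    (Conj (fst (translate_qf off \<phi>)) (fst (translate_qf (off + length (snd (translate_qf off \<phi>))) \<psi>)),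
     snd (translate_qf off \<phi>) @ snd (translate_qf (off + length (snd (translate_qf off \<phi>))) \<psi>))"
| "translate_qf off (Ex x \<phi>) = (FF, [])"

lemma translate_qf_wf:
  assumes "qfree \<psi>" "wf (expL L A) \<psi>" "fv \<psi> \<subseteq> {..<off}"
  shows "wf L (fst (translate_qf off \<psi>)) \<and> fv (fst (translate_qf off \<psi>)) \<subseteq> {..<off + length (snd (translate_qf off \<psi>))}
    \<and> set (snd (translate_qf off \<psi>)) \<subseteq> A"
  using assms
proof (induction \<psi> arbitrary: off)
  case (Rel R ts)
  show ?case
  proof (cases R)
    case (Inl r)
    then have "r \<in> Rs L" "length ts = ar L r" using Rel.prems by (auto simp: expL_def)
    then show ?thesis using Rel.prems Inl by simp
  next
    case (Inr a)
    then obtain \<phi> n bs where R: "R = Inr (\<phi>, n, bs)" by (cases a) auto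
    let ?Y = "off + length bs" and ?\<rho> = "atom_vars off n (length bs)"
    have \<phi>: "wf L \<phi>" "set bs \<subseteq> A" "fv \<phi> \<subseteq> {..<n + length bs}" "length ts = n"
      using Rel.prems R by (auto simp: expL_def)
    have "fv (rename ?\<rho> \<phi>) - {?Y..<?Y + length ts} \<subseteq> {..<?Y}"
      using \<phi>(3,4) by (auto simp: fv_rename[OF inj_atom_vars] atom_vars_def)
    then have "fv (let_terms ?Y ts (rename ?\<rho> \<phi>)) \<subseteq> {..<?Y}"
      using fv_let_terms[of ?Y ts "rename ?\<rho> \<phi>"] Rel.prems(3) by fastforce
    then show ?thesis using \<phi> Rel.prems R by (simp add: wf_let_terms wf_rename)
  qed
next
  case (Conj \<phi> \<psi>)
  let ?off' = "off + length (snd (translate_qf off \<phi>))"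
  have "wf L (fst (translate_qf off \<phi>)) \<and> fv (fst (translate_qf off \<phi>)) \<subseteq> {..<?off'}
    \<and> set (snd (translate_qf off \<phi>)) \<subseteq> A"
    using Conj.prems by (intro Conj.IH(1)) auto
  moreover have "wf L (fst (translate_qf ?off' \<psi>))
    \<and> fv (fst (translate_qf ?off' \<psi>)) \<subseteq> {..<?off' + length (snd (translate_qf ?off' \<psi>))}
    \<and> set (snd (translate_qf ?off' \<psi>)) \<subseteq> A"
    using Conj.prems by (intro Conj.IH(2)) auto
  ultimately show ?case by auto
qed auto

lemma sat_translate_qf_atom:
  assumes es: "elem_sub L N C"
    and \<psi>: "wf (expL L A) (Rel (Inr (\<phi>, n, bs)) ts)" "fv (Rel (Inr (\<phi>, n, bs)) ts) \<subseteq> {..<off}"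
    and e: "\<forall>i\<in>fv (Rel (Inr (\<phi>, n, bs)) ts). e i \<in> univ N" "\<forall>k<length bs. e (off + k) = bs ! k"
  shows "sat (expN C N) e (Rel (Inr (\<phi>, n, bs)) ts)
    = sat C e (let_terms (off + length bs) ts (rename (atom_vars off n (length bs)) \<phi>))"
proof -
  let ?Y = "off + length bs" and ?\<rho> = "atom_vars off n (length bs)"
  let ?e' = "\<lambda>z. if ?Y \<le> z \<and> z < ?Y + length ts then teval C e (ts ! (z - ?Y)) else e z"
  have \<phi>: "wf L \<phi>" "fv \<phi> \<subseteq> {..<n + length bs}" "length ts = n"
    using \<psi>(1) by (auto simp: expL_def)
  have args: "map (teval N e) ts = map (teval C e) ts" "map (teval N e) ts \<in> lists (univ N)"
    using elem_sub_teval_args[OF es, of ts e] \<psi>(1) e(1) by auto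
  have "\<forall>t\<in>set ts. fv_trm t \<subseteq> {..<?Y} \<and> teval C e t \<in> univ C"
    using args \<psi>(2) es by (auto simp: elem_sub_def simp del: map_eq_conv)
  then have "sat C e (let_terms ?Y ts (rename ?\<rho> \<phi>)) = sat C (?e' \<circ> ?\<rho>) \<phi>"
    by (simp add: sat_let_terms sat_rename[OF inj_atom_vars])
  also have "\<dots> = holds C \<phi> (map (teval C e) ts @ bs)"
    unfolding holds_def
  proof (rule sat_cong, intro ballI)
    fix j assume "j \<in> fv \<phi>"
    then have "j < n + length bs" using \<phi>(2) by auto
    then show "(?e' \<circ> ?\<rho>) j = (map (teval C e) ts @ bs) ! j"
      using \<phi>(3) e(2)[rule_format, of "j - n"] by (auto simp: atom_vars_def nth_append)
  qed
  finally show ?thesis using args(1) by (simp del: map_eq_conv)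
qed

lemma sat_translate_qf:
  assumes es: "elem_sub L N C"
  shows "qfree \<psi> \<Longrightarrow> wf (expL L A) \<psi> \<Longrightarrow> fv \<psi> \<subseteq> {..<off} \<Longrightarrow> \<forall>i\<in>fv \<psi>. e i \<in> univ N \<Longrightarrow>
    \<forall>k<length (snd (translate_qf off \<psi>)). e (off + k) = snd (translate_qf off \<psi>) ! k \<Longrightarrow>
    sat (expN C N) e \<psi> = sat C e (fst (translate_qf off \<psi>))"
proof (induction \<psi> arbitrary: off)
  case (Eq s t)
  then have "teval N e s = teval C e s" "teval N e t = teval C e t"
    using elem_sub_teval[OF es] by auto
  then show ?case by simp
next
  case (Rel R ts)
  have args: "map (teval N e) ts = map (teval C e) ts" "map (teval N e) ts \<in> lists (univ N)"
    using elem_sub_teval_args[OF es, of ts e] Rel.prems by auto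
  show ?case
  proof (cases R)
    case (Inl r)
    then have "r \<in> Rs L" "length ts = ar L r" using Rel.prems by (auto simp: expL_def)
    then show ?thesis using elem_sub_rl[OF es] args Inl by (simp del: map_eq_conv)
  next
    case (Inr a)
    then obtain \<phi> n bs where "R = Inr (\<phi>, n, bs)" by (cases a) auto
    then show ?thesis using sat_translate_qf_atom[OF es] Rel.prems by simp
  qed
next
  case (Conj \<phi> \<psi>)
  let ?k = "length (snd (translate_qf off \<phi>))"
  have "sat (expN C N) e \<phi> = sat C e (fst (translate_qf off \<phi>))"
    using Conj.prems by (intro Conj.IH(1)) (auto simp: nth_append)
  moreover have "sat (expN C N) e \<psi> = sat C e (fst (translate_qf (off + ?k) \<psi>))"
  proof (rule Conj.IH(2))
    show "\<forall>k<length (snd (translate_qf (off + ?k) \<psi>)). e (off + ?k + k) = snd (translate_qf (off + ?k) \<psi>) ! k"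
    proof (intro allI impI)
      fix k assume "k < length (snd (translate_qf (off + ?k) \<psi>))"
      then show "e (off + ?k + k) = snd (translate_qf (off + ?k) \<psi>) ! k"
        using Conj.prems(5)[rule_format, of "?k + k"] by (simp add: nth_append add.assoc)
    qed
  qed (use Conj.prems in auto)
  ultimately show ?case by simp
qed auto

lemma expN_formula_as_L_formula:
  assumes es: "elem_sub L N C" and qe: "has_qe (expL L A) (expN C N)"
    and \<phi>: "wf (expL L A) \<phi>" "fv \<phi> \<subseteq> {..<Suc (length ds)}" and ds: "set ds \<subseteq> univ N"
  shows "\<exists>\<theta> l. wf L \<theta> \<and> fv \<theta> \<subseteq> {..<Suc (length ds + length l)} \<and> set l \<subseteq> A \<and>
    (\<forall>c\<in>univ N. holds (expN C N) \<phi> (c # ds) = holds C \<theta> (c # ds @ l))"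
proof -
  let ?off = "Suc (length ds)"
  obtain \<psi> where \<psi>: "wf (expL L A) \<psi>" "qfree \<psi>" "fv \<psi> \<subseteq> {..<?off}"
    and equiv: "\<And>e. \<forall>i. e i \<in> univ N \<Longrightarrow> sat (expN C N) e \<phi> = sat (expN C N) e \<psi>"
    using qe \<phi> unfolding has_qe_def by fastforce
  define \<theta> l where "\<theta> = fst (translate_qf ?off \<psi>)" and "l = snd (translate_qf ?off \<psi>)"
  have "wf L \<theta> \<and> fv \<theta> \<subseteq> {..<?off + length l} \<and> set l \<subseteq> A"
    unfolding \<theta>_def l_def using \<psi> by (intro translate_qf_wf)
  moreover have "holds (expN C N) \<phi> (c # ds) = holds C \<theta> (c # ds @ l)" if c: "c \<in> univ N" for c
  proof -
    define e where "e i = (if i < ?off then (c # ds) ! i else c)" for i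
    have e_N: "e i \<in> univ N" for i
      using c ds by (cases i) (auto simp: e_def)
    have "holds (expN C N) \<phi> (c # ds) = sat (expN C N) e \<phi>"
      unfolding holds_def using \<phi>(2) by (intro sat_cong) (auto simp: e_def)
    also have "\<dots> = sat (expN C N) e \<psi>"
      using e_N by (intro equiv) simp
    also have "\<dots> = sat (expN C N) (\<lambda>i. (c # ds @ l) ! i) \<psi>"
      using \<psi>(3) by (intro sat_cong) (auto simp: e_def nth_Cons' nth_append)
    also have "\<dots> = holds C \<theta> (c # ds @ l)"
      unfolding holds_def \<theta>_def using \<psi> c ds
      by (intro sat_translate_qf[OF es]) (auto simp: l_def nth_append nth_Cons' subset_iff)
    finally show ?thesis .
  qed
  ultimately show ?thesis by (intro exI[of _ \<theta>] exI[of _ l]) auto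
qed

definition realizes :: "('u, 'f, 'r) struc \<Rightarrow> 'u \<Rightarrow> (('f, 'r) fm \<times> 'u list) set \<Rightarrow> bool" where
  "realizes M a p \<longleftrightarrow> (\<forall>(\<phi>, ds)\<in>p. holds M \<phi> (a # ds))"

lemma realizes_mono: "realizes M a p \<Longrightarrow> q \<subseteq> p \<Longrightarrow> realizes M a q"
  unfolding realizes_def by blast

lemma saturatedD:
  assumes "saturated L M \<kappa>" "B \<subseteq> univ M" "|B| <o \<kappa>"
    and "\<forall>(\<phi>, ds)\<in>p. wf L \<phi> \<and> ds \<in> lists B \<and> fv \<phi> \<subseteq> {..<Suc (length ds)}"
    and "\<And>q. finite q \<Longrightarrow> q \<subseteq> p \<Longrightarrow> \<exists>a\<in>univ M. realizes M a q"
  obtains a where "a \<in> univ M" "realizes M a p"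
proof -
  have "\<forall>q. finite q \<and> q \<subseteq> p \<longrightarrow> (\<exists>a\<in>univ M. \<forall>(\<phi>, ds)\<in>q. holds M \<phi> (a # ds))"
    using assms(5) unfolding realizes_def by blast
  then have "\<exists>a\<in>univ M. \<forall>(\<phi>, ds)\<in>p. holds M \<phi> (a # ds)"
    using assms(1)[unfolded saturated_def, THEN spec[of _ B], THEN spec[of _ p]] assms(2-4)
    by blast
  then show thesis using that unfolding realizes_def by blast
qed

lemma holds_append_unused:
  assumes "fv \<phi> \<subseteq> {..<Suc (length ns)}"
  shows "holds M \<phi> (x # ns @ zs) = holds M \<phi> (x # ns)"
proof (rule holds_cong, intro ballI)
  fix i assume "i \<in> fv \<phi>"
  then have "i < Suc (length ns)" using assms by auto
  then show "(x # ns @ zs) ! i = (x # ns) ! i" by (cases i) (auto simp: nth_append)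
qed

definition shift_params :: "nat \<Rightarrow> nat \<Rightarrow> nat" where
  "shift_params k j = (if j = 0 then 0 else j + k)"

lemma inj_shift_params: "inj (shift_params k)"
  unfolding inj_def shift_params_def by auto

lemma holds_shift_params:
  "holds M (rename (shift_params (length ns)) \<phi>) (x # ns @ zs) = holds M \<phi> (x # zs)"
proof (rule holds_rename[OF inj_shift_params])
  show "(x # ns @ zs) ! shift_params (length ns) i = (x # zs) ! i" for i
    by (cases i) (auto simp: shift_params_def nth_append)
qed

lemma fv_shift_params:
  assumes "fv \<phi> \<subseteq> {..<Suc (length zs)}"
  shows "fv (rename (shift_params (length ns)) \<phi>) \<subseteq> {..<Suc (length (ns @ zs))}"
  using assms by (auto simp: fv_rename[OF inj_shift_params] shift_params_def)

lemma finite_conjunction: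
  assumes "finite q" "\<forall>(\<phi>, ns)\<in>q. wf L \<phi> \<and> fv \<phi> \<subseteq> {..<Suc (length ns)}"
  obtains \<Phi> zs where "wf L \<Phi>" "fv \<Phi> \<subseteq> {..<Suc (length zs)}" "set zs \<subseteq> (\<Union>(\<phi>, ns)\<in>q. set ns)"
    "\<And>M x. holds M \<Phi> (x # zs) \<longleftrightarrow> realizes M x q"
  using assms
proof (induction q arbitrary: thesis rule: finite_induct)
  case empty
  show ?case by (rule empty.prems(1)[of "Neg FF" "[]"]) (auto simp: holds_def realizes_def)
next
  case (insert a q)
  obtain \<phi> ns where a: "a = (\<phi>, ns)" by fastforce
  then have \<phi>: "wf L \<phi>" "fv \<phi> \<subseteq> {..<Suc (length ns)}" using insert.prems(2) by auto
  obtain \<Phi> zs where \<Phi>: "wf L \<Phi>" "fv \<Phi> \<subseteq> {..<Suc (length zs)}" "set zs \<subseteq> (\<Union>(\<phi>, ns)\<in>q. set ns)"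
    "\<And>M x. holds M \<Phi> (x # zs) \<longleftrightarrow> realizes M x q"
    by (rule insert.IH) (use insert.prems(2) in auto)
  let ?\<Phi> = "Conj \<phi> (rename (shift_params (length ns)) \<Phi>)"
  have "holds M ?\<Phi> (x # ns @ zs) \<longleftrightarrow> realizes M x (insert a q)" for M x
    using holds_append_unused[OF \<phi>(2)] holds_shift_params[where \<phi> = \<Phi> and ns = ns] \<Phi>(4) a
    by (simp add: holds_def realizes_def)
  moreover have "fv ?\<Phi> \<subseteq> {..<Suc (length (ns @ zs))}"
    using \<phi>(2) fv_shift_params[OF \<Phi>(2), of ns] by fastforce
  ultimately show ?case
    using insert.prems(1)[of ?\<Phi> "ns @ zs"] \<phi>(1) \<Phi>(1,3) a by (auto simp: wf_rename)
qed

lemma tp_length_eq: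
  assumes "tp L C bs B = tp L C cs B"
  shows "length bs = length cs"
proof -
  have "(Eq (Var k) (Var k), []) \<in> tp L C xs B \<longleftrightarrow> k < length xs" for k xs
    by (auto simp: tp_def holds_def)
  then show ?thesis using assms by (metis linorder_neqE_nat less_irrefl)
qed

lemma tp_eq_if_realizes:
  assumes "realizes C c' (tp L C [c] B)"
  shows "tp L C [c'] B = tp L C [c] B"
proof
  show "tp L C [c] B \<subseteq> tp L C [c'] B"
    using assms by (auto simp: tp_def realizes_def)
  show "tp L C [c'] B \<subseteq> tp L C [c] B"
  proof
    fix x assume x: "x \<in> tp L C [c'] B"
    obtain \<phi> ns where x_eq: "x = (\<phi>, ns)" by fastforce
    show "x \<in> tp L C [c] B"
    proof (rule ccontr)
      assume "x \<notin> tp L C [c] B"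
      then have "(Neg \<phi>, ns) \<in> tp L C [c] B" using x x_eq by (auto simp: tp_def holds_def)
      then have "holds C (Neg \<phi>) (c' # ns)" using assms unfolding realizes_def by blast
      then show False using x x_eq by (simp add: tp_def holds_def)
    qed
  qed
qed

definition move_first_to :: "nat \<Rightarrow> nat \<Rightarrow> nat" where
  "move_first_to n j = (if j = 0 then n else if j \<le> n then j - 1 else j)"

lemma inj_move_first_to: "inj (move_first_to n)"
  unfolding inj_def move_first_to_def by auto

text \<open>A type over \<open>Y\<close> that is finitely satisfiable in \<open>M\<close> does not split over \<open>M\<close>: a formula
  \<open>\<phi>(x, bs) \<and> \<not> \<phi>(x, cs)\<close> of the type is satisfied by some \<open>m \<in> M\<close>, and then \<open>\<phi>(m, y)\<close> separates
  \<open>tp(bs/M)\<close> from \<open>tp(cs/M)\<close>.\<close>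

lemma does_not_split_if_finitely_satisfiable:
  assumes fs: "\<forall>(\<phi>, ns)\<in>tp L C [c] Y. \<exists>m\<in>M. holds C \<phi> (m # ns)"
  shows "does_not_split L C (tp L C [c] Y) M"
  unfolding does_not_split_def
proof (intro allI impI notI)
  fix \<phi> bs cs
  assume in_tp: "(\<phi>, bs) \<in> tp L C [c] Y \<and> (Neg \<phi>, cs) \<in> tp L C [c] Y"
    and same_tp: "tp L C bs M = tp L C cs M"
  let ?n = "length bs"
  have n: "length cs = ?n" using tp_length_eq[OF same_tp] by simp
  have \<phi>: "wf L \<phi>" "fv \<phi> \<subseteq> {..<Suc ?n}" "bs @ cs \<in> lists Y"
    using in_tp by (auto simp: tp_def)
  let ?D = "Conj \<phi> (Neg (rename (shift_params ?n) \<phi>))"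
  have D: "holds C ?D (x # bs @ cs) \<longleftrightarrow> holds C \<phi> (x # bs) \<and> \<not> holds C \<phi> (x # cs)" for x
    using holds_append_unused[OF \<phi>(2)] holds_shift_params[where \<phi> = \<phi> and ns = bs] n
    by (simp add: holds_def)
  have "(?D, bs @ cs) \<in> tp L C [c] Y"
    using in_tp \<phi> D fv_shift_params[of \<phi> cs bs] n by (auto simp: tp_def holds_def wf_rename)
  then obtain m where m: "m \<in> M" "holds C \<phi> (m # bs)" "\<not> holds C \<phi> (m # cs)"
    using fs D by fastforce
  let ?\<phi>' = "rename (move_first_to ?n) \<phi>"
  have moved: "holds C ?\<phi>' (xs @ [m]) = holds C \<phi> (m # xs)" if "length xs = ?n" for xs
    using \<phi>(2) that
    by (intro holds_rename[OF inj_move_first_to]) (auto simp: move_first_to_def nth_append nth_Cons')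
  have "fv ?\<phi>' \<subseteq> {..<?n + length [m]}"
    using \<phi>(2) by (auto simp: fv_rename[OF inj_move_first_to] move_first_to_def)
  then have "(?\<phi>', [m]) \<in> tp L C bs M" "(?\<phi>', [m]) \<notin> tp L C cs M"
    using \<phi>(1) m moved[of bs] moved[of cs] n by (auto simp: tp_def wf_rename)
  then show False using same_tp by simp
qed

definition reorder_params :: "nat \<Rightarrow> nat \<Rightarrow> nat \<Rightarrow> nat" where
  "reorder_params d k i =
    (if i = 0 then k else if i \<le> d then k + i else if i \<le> d + k then i - d - 1 else i)"

lemma inj_reorder_params: "inj (reorder_params d k)"
  unfolding inj_def reorder_params_def by auto

lemma holds_reorder_params:
  assumes "fv \<theta> \<subseteq> {..<Suc (length ds + length l)}"
  shows "holds M (rename (reorder_params (length ds) (length l)) \<theta>) (l @ [x] @ ds) = holds M \<theta> (x # ds @ l)"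
proof (rule holds_rename[OF inj_reorder_params])
  fix i assume "i \<in> fv \<theta>"
  then have "i \<le> length ds + length l" using assms by auto
  then show "(l @ [x] @ ds) ! reorder_params (length ds) (length l) i = (x # ds @ l) ! i"
    by (cases i) (auto simp: reorder_params_def nth_append)
qed

lemma weakly_orthogonal_transfer:
  assumes wo: "weakly_orthogonal L C Y (tp L C l Y) (tp L C [c] Y)"
    and in_C: "l \<in> lists (univ C)" "c \<in> univ C" "c' \<in> univ C"
    and same_tp: "tp L C [c'] Y = tp L C [c] Y"
    and \<theta>: "wf L \<theta>" "ds \<in> lists Y" "fv \<theta> \<subseteq> {..<Suc (length ds + length l)}" "holds C \<theta> (c # ds @ l)"
  shows "holds C \<theta> (c' # ds @ l)"
proof -
  let ?\<chi> = "rename (reorder_params (length ds) (length l)) \<theta>"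
  have "tp L C (l @ [c]) Y = tp L C (l @ [c']) Y"
    using wo in_C same_tp unfolding weakly_orthogonal_def by simp
  moreover have "fv ?\<chi> \<subseteq> {..<length (l @ [c]) + length ds}"
    using \<theta>(3) by (auto simp: fv_rename[OF inj_reorder_params] reorder_params_def)
  then have "(?\<chi>, ds) \<in> tp L C (l @ [c]) Y"
    using \<theta> holds_reorder_params[OF \<theta>(3)] by (simp add: tp_def wf_rename)
  ultimately have "(?\<chi>, ds) \<in> tp L C (l @ [c']) Y" by simp
  then show ?thesis using holds_reorder_params[OF \<theta>(3)] by (simp add: tp_def)
qed

lemma saturated_tp_isolates:
  assumes sat: "saturated L C \<mu>" and D: "D \<subseteq> univ C" "|D| <o \<mu>" "Y \<subseteq> D"
    and \<theta>: "wf L \<theta>" "ns \<in> lists D" "fv \<theta> \<subseteq> {..<Suc (length ns)}"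
    and implied: "\<And>c'. c' \<in> univ C \<Longrightarrow> tp L C [c'] Y = tp L C [c] Y \<Longrightarrow> holds C \<theta> (c' # ns)"
  obtains Q where "finite Q" "Q \<subseteq> tp L C [c] Y"
    "\<And>c'. c' \<in> univ C \<Longrightarrow> realizes C c' Q \<Longrightarrow> holds C \<theta> (c' # ns)"
proof (rule ccontr)
  note isolating = that
  assume no_Q: "\<not> thesis"
  let ?\<Pi> = "insert (Neg \<theta>, ns) (tp L C [c] Y)"
  have \<Pi>_fs: "\<exists>c'\<in>univ C. realizes C c' q" if q: "finite q" "q \<subseteq> ?\<Pi>" for q
  proof -
    obtain c' where c': "c' \<in> univ C" "realizes C c' (q \<inter> tp L C [c] Y)" "\<not> holds C \<theta> (c' # ns)"
      using no_Q isolating[of "q \<inter> tp L C [c] Y"] q(1) by blast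
    have "holds C \<phi> (c' # ds)" if "(\<phi>, ds) \<in> q" for \<phi> ds
    proof (cases "(\<phi>, ds) \<in> tp L C [c] Y")
      case True
      then show ?thesis using c'(2) that unfolding realizes_def by blast
    next
      case False
      then show ?thesis using c'(3) that q(2) by (auto simp: holds_def)
    qed
    then have "realizes C c' q" unfolding realizes_def by blast
    then show ?thesis using c'(1) by blast
  qed
  have \<Pi>_type: "\<forall>(\<phi>, ds)\<in>?\<Pi>. wf L \<phi> \<and> ds \<in> lists D \<and> fv \<phi> \<subseteq> {..<Suc (length ds)}"
    using \<theta> lists_mono[OF D(3)] by (fastforce simp: tp_def)
  obtain c' where c': "c' \<in> univ C" "realizes C c' ?\<Pi>"
    using saturatedD[OF sat D(1,2) \<Pi>_type \<Pi>_fs] by blast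
  then have "tp L C [c'] Y = tp L C [c] Y"
    by (intro tp_eq_if_realizes realizes_mono[OF c'(2) subset_insertI])
  moreover have "\<not> holds C \<theta> (c' # ns)"
    using c'(2) by (auto simp: realizes_def holds_def)
  ultimately show False using implied c'(1) by blast
qed

text \<open>Realize the partial type together with the negations of all formulas over \<open>Y\<close> that fail
  on all of \<open>M\<close>.\<close>

lemma coheir_realization:
  assumes sat: "saturated L C \<mu>" and D: "D \<subseteq> univ C" "|D| <o \<mu>" "Y \<subseteq> D"
    and M: "M \<subseteq> univ C"
    and p: "\<forall>(\<phi>, ns)\<in>p. wf L \<phi> \<and> ns \<in> lists D \<and> fv \<phi> \<subseteq> {..<Suc (length ns)}"
    and fs: "\<And>q. finite q \<Longrightarrow> q \<subseteq> p \<Longrightarrow> \<exists>m\<in>M. realizes C m q"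
  obtains c where "c \<in> univ C" "realizes C c p" "\<forall>(\<phi>, ns)\<in>tp L C [c] Y. \<exists>m\<in>M. holds C \<phi> (m # ns)"
proof -
  define avoid where "avoid = {(Neg \<phi>, ns) | \<phi> ns. wf L \<phi> \<and> ns \<in> lists Y \<and>
    fv \<phi> \<subseteq> {..<Suc (length ns)} \<and> (\<forall>m\<in>M. \<not> holds C \<phi> (m # ns))}"
  have fs': "\<exists>c\<in>univ C. realizes C c q" if q: "finite q" "q \<subseteq> p \<union> avoid" for q
  proof -
    obtain m where m: "m \<in> M" "realizes C m (q \<inter> p)"
      using fs[of "q \<inter> p"] q(1) by blast
    have "holds C \<phi> (m # ns)" if "(\<phi>, ns) \<in> q" for \<phi> ns
    proof (cases "(\<phi>, ns) \<in> p")
      case True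
      then show ?thesis using m(2) that unfolding realizes_def by blast
    next
      case False
      then show ?thesis using m(1) that q(2) unfolding avoid_def by (auto simp: holds_def)
    qed
    then have "realizes C m q" unfolding realizes_def by blast
    then show ?thesis using m(1) M by blast
  qed
  have "\<forall>(\<phi>, ns)\<in>avoid. wf L \<phi> \<and> ns \<in> lists D \<and> fv \<phi> \<subseteq> {..<Suc (length ns)}"
    using lists_mono[OF D(3)] unfolding avoid_def by fastforce
  then have type': "\<forall>(\<phi>, ns)\<in>p \<union> avoid. wf L \<phi> \<and> ns \<in> lists D \<and> fv \<phi> \<subseteq> {..<Suc (length ns)}"
    using p by blast
  obtain c where c: "c \<in> univ C" "realizes C c (p \<union> avoid)"
    using saturatedD[OF sat D(1,2) type' fs'] by blast
  have "\<exists>m\<in>M. holds C \<phi> (m # ns)" if "(\<phi>, ns) \<in> tp L C [c] Y" for \<phi> ns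
  proof (rule ccontr)
    assume "\<not> (\<exists>m\<in>M. holds C \<phi> (m # ns))"
    then have "(Neg \<phi>, ns) \<in> avoid" using that unfolding avoid_def by (auto simp: tp_def)
    then have "holds C (Neg \<phi>) (c # ns)" using c(2) unfolding realizes_def by blast
    then show False using that by (simp add: tp_def holds_def)
  qed
  then show thesis using that c realizes_mono[OF c(2)] by blast
qed

lemma weakly_orthogonal_isolates:
  assumes sat: "saturated L C \<mu>" and D: "D \<subseteq> univ C" "|D| <o \<mu>" "Y \<subseteq> D"
    and wo: "weakly_orthogonal L C Y (tp L C l Y) (tp L C [c] Y)" and "c \<in> univ C" "l \<in> lists D"
    and \<theta>: "wf L \<theta>" "ds \<in> lists Y" "fv \<theta> \<subseteq> {..<Suc (length ds + length l)}" "holds C \<theta> (c # ds @ l)"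
  obtains Q where "finite Q" "Q \<subseteq> tp L C [c] Y"
    "\<And>c'. c' \<in> univ C \<Longrightarrow> realizes C c' Q \<Longrightarrow> holds C \<theta> (c' # ds @ l)"
proof -
  have "l \<in> lists (univ C)" using assms(7) D(1) by auto
  then have "holds C \<theta> (c' # ds @ l)" if "c' \<in> univ C" "tp L C [c'] Y = tp L C [c] Y" for c'
    using weakly_orthogonal_transfer[OF wo _ assms(6) that \<theta>] by blast
  moreover have "ds @ l \<in> lists D" "fv \<theta> \<subseteq> {..<Suc (length (ds @ l))}"
    using \<theta>(2,3) assms(7) D(3) by auto
  ultimately show thesis
    using saturated_tp_isolates[OF sat D \<theta>(1)] that by blast
qed

lemma elem_sub_realizes_finite:
  assumes es: "elem_sub L N C" and "c \<in> univ C" "finite q" "q \<subseteq> tp L C [c] (univ N)"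
  shows "\<exists>a\<in>univ N. realizes N a q"
proof -
  have "\<forall>(\<phi>, ns)\<in>q. wf L \<phi> \<and> fv \<phi> \<subseteq> {..<Suc (length ns)}"
    using assms(4) by (auto simp: tp_def)
  then obtain \<Phi> zs where \<Phi>: "wf L \<Phi>" "fv \<Phi> \<subseteq> {..<Suc (length zs)}" "set zs \<subseteq> (\<Union>(\<phi>, ns)\<in>q. set ns)"
    "\<And>M x. holds M \<Phi> (x # zs) \<longleftrightarrow> realizes M x q"
    using finite_conjunction[OF assms(3)] by blast
  have zs: "set zs \<subseteq> univ N" using \<Phi>(3) assms(4) by (force simp: tp_def)
  obtain x0 where x0: "x0 \<in> univ N" using es unfolding elem_sub_def is_struct_def by auto
  have upd: "(\<lambda>i. (x0 # zs) ! i)(0 := a) = (\<lambda>i. (a # zs) ! i)" for a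
    by (auto simp: nth_Cons')
  have "realizes C c q" using assms(4) by (auto simp: tp_def realizes_def)
  then have "holds C (Ex 0 \<Phi>) (x0 # zs)"
    using assms(2) \<Phi>(4) by (auto simp: holds_def upd)
  moreover have "holds N (Ex 0 \<Phi>) (x0 # zs) = holds C (Ex 0 \<Phi>) (x0 # zs)"
    using \<Phi>(1,2) zs x0 by (intro elem_sub_holds[OF es]) auto
  ultimately show ?thesis using \<Phi>(4) by (auto simp: holds_def upd)
qed

lemma elem_sub_realizes_tp:
  assumes es: "elem_sub L N C" and a: "a \<in> univ N" "realizes N a P" and P: "P \<subseteq> tp L C [c] (univ N)"
  shows "realizes C a P"
proof -
  have "holds C \<phi> (a # ns)" if "(\<phi>, ns) \<in> P" for \<phi> ns
  proof -
    have "wf L \<phi>" "a # ns \<in> lists (univ N)" "fv \<phi> \<subseteq> {..<length (a # ns)}"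
      using that P a(1) by (auto simp: tp_def)
    then have "holds N \<phi> (a # ns) = holds C \<phi> (a # ns)" by (rule elem_sub_holds[OF es])
    then show ?thesis using a(2) that unfolding realizes_def by auto
  qed
  then show ?thesis unfolding realizes_def by blast
qed

subsection \<open>Cardinalities below \<open>\<kappa>\<close>\<close>

lemma card_of_subset_ordLess: "A \<subseteq> B \<Longrightarrow> |B| <o r \<Longrightarrow> |A| <o r"
  using card_of_mono1 ordLeq_ordLess_trans by blast

lemma card_of_image_ordLess: "|A| <o r \<Longrightarrow> |f ` A| <o r"
  using card_of_image ordLeq_ordLess_trans by blast

lemma infinite_Field_if_nat_ordLess:
  assumes "Card_order r" "|UNIV :: nat set| <o r"
  shows "\<not> finite (Field r)"
proof -
  have "|UNIV :: nat set| \<le>o |Field r|"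
    using assms ordLess_imp_ordLeq ordLeq_ordIso_trans card_of_Field_ordIso ordIso_symmetric by blast
  then show ?thesis using card_of_ordLeq_infinite by blast
qed

lemma nat_ordLess_if_formulas_ordLess:
  fixes L :: "('f, 'r) lang"
  assumes "|{\<phi>. wf L \<phi>}| <o r"
  shows "|UNIV :: nat set| <o r"
proof -
  have "inj (\<lambda>n. (Neg ^^ n) (FF :: ('f, 'r) fm))"
  proof (rule injI)
    show "(Neg ^^ m) FF = (Neg ^^ n) (FF :: ('f, 'r) fm) \<Longrightarrow> m = n" for m n
    proof (induction m arbitrary: n)
      case 0 then show ?case by (cases n) auto
    next
      case (Suc m) then show ?case by (cases n) auto
    qed
  qed
  moreover have "wf L ((Neg ^^ n) FF)" for n
    by (induction n) auto
  ultimately have "|UNIV :: nat set| \<le>o |{\<phi>. wf L \<phi>}|"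
    by (intro card_of_ordLeq[THEN iffD1]) (auto intro!: exI[of _ "\<lambda>n. (Neg ^^ n) FF"])
  then show ?thesis using assms ordLeq_ordLess_trans by blast
qed

lemma finite_card_of_ordLess:
  assumes "Card_order r" "\<not> finite (Field r)" "finite A"
  shows "|A| <o r"
  using assms finite_ordLess_infinite card_of_Well_order card_order_on_well_order_on Field_card_of
  by metis

lemma card_of_UNION_ordLess:
  assumes "Card_order r" "regularCard r" "\<not> finite (Field r)" "|I| <o r" "\<forall>i\<in>I. |A i| <o r"
  shows "|\<Union>i\<in>I. A i| <o r"
  using card_of_UNION_ordLess_infinite_Field[OF regularCard_stable[OF assms(1,3,2)] assms(1,4,5)] .

lemma card_of_Times_ordLess:
  assumes "Card_order r" "regularCard r" "\<not> finite (Field r)" "|A| <o r" "|B| <o r"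
  shows "|A \<times> B| <o r"
proof -
  have "|\<Union>a\<in>A. Pair a ` B| <o r"
    using card_of_image_ordLess[OF assms(5)] by (intro card_of_UNION_ordLess[OF assms(1-4)]) blast
  moreover have "A \<times> B = (\<Union>a\<in>A. Pair a ` B)" by auto
  ultimately show ?thesis by simp
qed

lemma card_of_lists_ordLess:
  assumes r: "Card_order r" "regularCard r" "|UNIV :: nat set| <o r" and A: "|A| <o r"
  shows "|lists A| <o r"
proof -
  have inf: "\<not> finite (Field r)" using infinite_Field_if_nat_ordLess r by blast
  have "|{xs\<in>lists A. length xs = n}| <o r" for n
  proof (induction n)
    case 0
    have "{xs\<in>lists A. length xs = 0} = {[]}" by auto
    then show ?case using finite_card_of_ordLess[OF r(1) inf, of "{[]}"] by simp
  next
    case (Suc n)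
    have "{xs\<in>lists A. length xs = Suc n} = case_prod Cons ` (A \<times> {xs\<in>lists A. length xs = n})"
      by (auto simp: length_Suc_conv image_iff)
    then show ?case
      using card_of_image_ordLess[OF card_of_Times_ordLess[OF r(1,2) inf A Suc]] by simp
  qed
  then have "|\<Union>n. {xs\<in>lists A. length xs = n}| <o r"
    by (intro card_of_UNION_ordLess[OF r(1,2) inf r(3)]) blast
  then show ?thesis by (rule card_of_subset_ordLess[rotated]) blast
qed

lemma finite_parts_witnesses_ordLess:
  assumes r: "Card_order r" "regularCard r" "|UNIV :: nat set| <o r" and "|I| <o r"
    and witness: "\<And>F. finite F \<Longrightarrow> F \<subseteq> I \<Longrightarrow> \<exists>m\<in>X. P F m"
  obtains M where "M \<subseteq> X" "|M| <o r" "\<And>F. finite F \<Longrightarrow> F \<subseteq> I \<Longrightarrow> \<exists>m\<in>M. P F m"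
proof
  define w where "w F = (SOME m. m \<in> X \<and> P F m)" for F
  have w: "w F \<in> X \<and> P F (w F)" if "finite F" "F \<subseteq> I" for F
    unfolding w_def using witness[OF that] by (rule someI2_bex) blast
  show "w ` {F. finite F \<and> F \<subseteq> I} \<subseteq> X" "\<And>F. finite F \<Longrightarrow> F \<subseteq> I \<Longrightarrow> \<exists>m\<in>w ` {F. finite F \<and> F \<subseteq> I}. P F m"
    using w by auto
  have "{F. finite F \<and> F \<subseteq> I} \<subseteq> set ` lists I"
  proof
    fix F assume "F \<in> {F. finite F \<and> F \<subseteq> I}"
    then obtain xs where "set xs = F" "F \<subseteq> I" using finite_list by blast
    then show "F \<in> set ` lists I" by auto
  qed
  then have "|{F. finite F \<and> F \<subseteq> I}| <o r"
    using card_of_image_ordLess[OF card_of_lists_ordLess[OF r assms(4)]] by (rule card_of_subset_ordLess)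
  then show "|w ` {F. finite F \<and> F \<subseteq> I}| <o r" by (rule card_of_image_ordLess)
qed

subsection \<open>Saturation of \<open>N\<^sub>[\<^sub>A\<^sub>]\<close>\<close>

lemma nonsplitting_realization:
  assumes es: "elem_sub L N C" and satC: "saturated L C \<mu>"
    and \<kappa>: "Card_order \<kappa>" "regularCard \<kappa>" "|UNIV :: nat set| <o \<kappa>"
    and D: "D \<subseteq> univ C" "|D| <o \<mu>" "univ N \<subseteq> D"
    and p: "\<forall>(\<phi>, ns)\<in>p. wf L \<phi> \<and> ns \<in> lists D \<and> fv \<phi> \<subseteq> {..<Suc (length ns)}" "|p| <o \<kappa>"
    and fs: "\<And>q. finite q \<Longrightarrow> q \<subseteq> p \<Longrightarrow> \<exists>m\<in>univ N. realizes C m q"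
  obtains c where "c \<in> univ C" "realizes C c p" "tp L C [c] (univ N) \<in> S_nsp_lt L C N \<kappa>"
proof -
  obtain M where M: "M \<subseteq> univ N" "|M| <o \<kappa>" "\<And>q. finite q \<Longrightarrow> q \<subseteq> p \<Longrightarrow> \<exists>m\<in>M. realizes C m q"
    using finite_parts_witnesses_ordLess[where P = "\<lambda>q m. realizes C m q", OF \<kappa> p(2) fs] by blast
  obtain c where c: "c \<in> univ C" "realizes C c p"
    "\<forall>(\<phi>, ns)\<in>tp L C [c] (univ N). \<exists>m\<in>M. holds C \<phi> (m # ns)"
    using coheir_realization[OF satC D _ p(1) M(3)] M(1) D by blast
  have "tp L C [c] (univ N) \<in> S_nsp_lt L C N \<kappa>"
    using does_not_split_if_finitely_satisfiable[OF c(3)] M(1,2) c(1)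
    unfolding S_nsp_lt_def S_types_def by auto
  then show thesis using that c(1,2) by blast
qed

lemma elem_sub_realizes_implied:
  assumes es: "elem_sub L N C" and satN: "saturated L N \<kappa>"
    and \<kappa>: "Card_order \<kappa>" "regularCard \<kappa>" "\<not> finite (Field \<kappa>)" and I: "|I| <o \<kappa>"
    and c: "c \<in> univ C"
    and implied: "\<And>i. i \<in> I \<Longrightarrow>
      \<exists>Q. finite Q \<and> Q \<subseteq> tp L C [c] (univ N) \<and> (\<forall>a\<in>univ N. realizes C a Q \<longrightarrow> G i a)"
  obtains a where "a \<in> univ N" "\<And>i. i \<in> I \<Longrightarrow> G i a"
proof -
  obtain Q where Q: "\<And>i. i \<in> I \<Longrightarrow> finite (Q i)" "\<And>i. i \<in> I \<Longrightarrow> Q i \<subseteq> tp L C [c] (univ N)"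
    "\<And>i a. i \<in> I \<Longrightarrow> a \<in> univ N \<Longrightarrow> realizes C a (Q i) \<Longrightarrow> G i a"
    using implied by metis
  define P where "P = (\<Union>i\<in>I. Q i)"
  define B where "B = (\<Union>i\<in>I. \<Union>(\<phi>, ns)\<in>Q i. set ns)"
  have P_tp: "P \<subseteq> tp L C [c] (univ N)" using Q(2) by (auto simp: P_def)
  have B: "B \<subseteq> univ N" using Q(2) by (fastforce simp: B_def tp_def)
  have B_small: "|B| <o \<kappa>"
    unfolding B_def using Q(1)
    by (intro card_of_UNION_ordLess[OF \<kappa> I] ballI finite_card_of_ordLess[OF \<kappa>(1,3)]) auto
  have P_type: "\<forall>(\<phi>, ns)\<in>P. wf L \<phi> \<and> ns \<in> lists B \<and> fv \<phi> \<subseteq> {..<Suc (length ns)}"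
    using P_tp by (fastforce simp: P_def B_def tp_def)
  have P_fs: "\<exists>a\<in>univ N. realizes N a q" if "finite q" "q \<subseteq> P" for q
    using elem_sub_realizes_finite[OF es c] that P_tp by blast
  obtain a where a: "a \<in> univ N" "realizes N a P"
    using saturatedD[OF satN B B_small P_type P_fs] by blast
  have a_C: "realizes C a P" using elem_sub_realizes_tp[OF es a P_tp] .
  show thesis
  proof (rule that[OF a(1)])
    fix i assume i: "i \<in> I"
    then have "realizes C a (Q i)" using realizes_mono[OF a_C] unfolding P_def by blast
    then show "G i a" by (rule Q(3)[OF i a(1)])
  qed
qed

lemma realize_family_with_orthogonal_params:
  fixes \<theta> :: "'i \<Rightarrow> ('f, 'r) fm" and ds l :: "'i \<Rightarrow> 'u list"
  assumes es: "elem_sub L N C" and satN: "saturated L N \<kappa>" and satC: "saturated L C \<mu>"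
    and \<kappa>: "Card_order \<kappa>" "regularCard \<kappa>" "|UNIV :: nat set| <o \<kappa>" "|{\<phi>. wf L \<phi>}| <o \<kappa>"
    and \<mu>: "|univ N \<union> A| <o \<mu>" and A: "A \<subseteq> univ C" "|A| <o \<kappa>"
    and orth: "\<forall>as\<in>lists A. tp L C as (univ N) \<in> S_nsp_ge L C N \<kappa>"
    and B: "B \<subseteq> univ N" "|B| <o \<kappa>"
    and fam: "\<And>i. i \<in> I \<Longrightarrow> wf L (\<theta> i) \<and> ds i \<in> lists B \<and> l i \<in> lists A
      \<and> fv (\<theta> i) \<subseteq> {..<Suc (length (ds i) + length (l i))}"
    and fs: "\<And>F. finite F \<Longrightarrow> F \<subseteq> I \<Longrightarrow> \<exists>m\<in>univ N. \<forall>i\<in>F. holds C (\<theta> i) (m # ds i @ l i)"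
  obtains c where "c \<in> univ N" "\<And>i. i \<in> I \<Longrightarrow> holds C (\<theta> i) (c # ds i @ l i)"
proof -
  have inf: "\<not> finite (Field \<kappa>)" using infinite_Field_if_nat_ordLess \<kappa> by blast
  have NA: "univ N \<union> A \<subseteq> univ C" using es A(1) by (auto simp: elem_sub_def)
  let ?T = "(\<lambda>i. (\<theta> i, ds i, l i)) ` I" and ?flat = "(\<lambda>i. (\<theta> i, ds i @ l i)) ` I"
  have "|{\<theta>. wf L \<theta>} \<times> lists B \<times> lists A| <o \<kappa>"
    using card_of_lists_ordLess[OF \<kappa>(1-3)] B(2) A(2)
    by (intro card_of_Times_ordLess[OF \<kappa>(1,2) inf \<kappa>(4)] card_of_Times_ordLess[OF \<kappa>(1,2) inf])
  moreover have "?T \<subseteq> {\<theta>. wf L \<theta>} \<times> lists B \<times> lists A" using fam by auto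
  ultimately have T_small: "|?T| <o \<kappa>" by (rule card_of_subset_ordLess[rotated])
  have "?flat = (\<lambda>(\<theta>, ds, l). (\<theta>, ds @ l)) ` ?T" by (simp add: image_image)
  then have flat_small: "|?flat| <o \<kappa>" using card_of_image_ordLess[OF T_small] by simp
  have flat_type: "\<forall>(\<phi>, ns)\<in>?flat. wf L \<phi> \<and> ns \<in> lists (univ N \<union> A) \<and> fv \<phi> \<subseteq> {..<Suc (length ns)}"
    using fam B(1) by fastforce
  have flat_fs: "\<exists>m\<in>univ N. realizes C m q" if q: "finite q" "q \<subseteq> ?flat" for q
  proof -
    obtain F where "F \<subseteq> I" "finite F" "q = (\<lambda>i. (\<theta> i, ds i @ l i)) ` F"
      using finite_subset_image[OF q] by blast
    then show ?thesis using fs[of F] by (auto simp: realizes_def)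
  qed
  obtain c where c: "c \<in> univ C" "realizes C c ?flat" "tp L C [c] (univ N) \<in> S_nsp_lt L C N \<kappa>"
    using nonsplitting_realization[OF es satC \<kappa>(1-3) NA \<mu> Un_upper1 flat_type flat_small flat_fs]
    by blast
  define G where "G t a \<longleftrightarrow> holds C (fst t) (a # fst (snd t) @ snd (snd t))" for t a
  have "\<exists>Q. finite Q \<and> Q \<subseteq> tp L C [c] (univ N) \<and> (\<forall>a\<in>univ N. realizes C a Q \<longrightarrow> G t a)"
    if "t \<in> ?T" for t
  proof -
    obtain i where i: "i \<in> I" "t = (\<theta> i, ds i, l i)" using \<open>t \<in> ?T\<close> by blast
    have wo: "weakly_orthogonal L C (univ N) (tp L C (l i) (univ N)) (tp L C [c] (univ N))"
      using orth fam[OF i(1)] c(3) unfolding S_nsp_ge_def by blast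
    have holds_c: "holds C (\<theta> i) (c # ds i @ l i)"
      using c(2) i(1) unfolding realizes_def by blast
    have \<theta>: "wf L (\<theta> i)" "ds i \<in> lists (univ N)" "l i \<in> lists (univ N \<union> A)"
      "fv (\<theta> i) \<subseteq> {..<Suc (length (ds i) + length (l i))}"
      using fam[OF i(1)] B(1) by auto
    obtain Q where "finite Q" "Q \<subseteq> tp L C [c] (univ N)"
      "\<And>c'. c' \<in> univ C \<Longrightarrow> realizes C c' Q \<Longrightarrow> holds C (\<theta> i) (c' # ds i @ l i)"
      using weakly_orthogonal_isolates[OF satC NA \<mu> Un_upper1 wo c(1) \<theta>(3,1,2,4) holds_c] by blast
    then show ?thesis using es i(2) by (auto simp: elem_sub_def G_def)
  qed
  then obtain a where "a \<in> univ N" "\<And>t. t \<in> ?T \<Longrightarrow> G t a"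
    using elem_sub_realizes_implied[where G = G, OF es satN \<kappa>(1,2) inf T_small c(1)] by blast
  then show thesis using that unfolding G_def by auto
qed

lemma saturated_expN:
  assumes es: "elem_sub L N C" and satN: "saturated L N \<kappa>" and satC: "saturated L C \<mu>"
    and \<kappa>: "Card_order \<kappa>" "regularCard \<kappa>" "|UNIV :: nat set| <o \<kappa>" "|{\<phi>. wf L \<phi>}| <o \<kappa>"
    and \<mu>: "|univ N \<union> A| <o \<mu>" and A: "A \<subseteq> univ C" "|A| <o \<kappa>"
    and orth: "\<forall>as\<in>lists A. tp L C as (univ N) \<in> S_nsp_ge L C N \<kappa>"
    and qe: "has_qe (expL L A) (expN C N)"
  shows "saturated (expL L A) (expN C N) \<kappa>"
  unfolding saturated_def univ_expN
proof (intro allI impI, elim conjE)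
  fix B p
  assume B: "B \<subseteq> univ N" "|B| <o \<kappa>"
    and p: "\<forall>(\<phi>, ds)\<in>p. wf (expL L A) \<phi> \<and> ds \<in> lists B \<and> fv \<phi> \<subseteq> {..<Suc (length ds)}"
    and fs: "\<forall>q. finite q \<and> q \<subseteq> p \<longrightarrow> (\<exists>a\<in>univ N. \<forall>(\<phi>, ds)\<in>q. holds (expN C N) \<phi> (a # ds))"
  have "\<exists>\<theta> l. wf L \<theta> \<and> fv \<theta> \<subseteq> {..<Suc (length (snd x) + length l)} \<and> set l \<subseteq> A \<and>
      (\<forall>c\<in>univ N. holds (expN C N) (fst x) (c # snd x) = holds C \<theta> (c # snd x @ l))" if "x \<in> p" for x
    using bspec[OF p that] B(1) by (intro expN_formula_as_L_formula[OF es qe]) (auto split: prod.splits)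
  then obtain \<Theta> \<Lambda> where T: "\<And>x. x \<in> p \<Longrightarrow> wf L (\<Theta> x) \<and>
      fv (\<Theta> x) \<subseteq> {..<Suc (length (snd x) + length (\<Lambda> x))} \<and> set (\<Lambda> x) \<subseteq> A \<and>
      (\<forall>c\<in>univ N. holds (expN C N) (fst x) (c # snd x) = holds C (\<Theta> x) (c # snd x @ \<Lambda> x))"
    by metis
  have fs': "\<exists>m\<in>univ N. \<forall>x\<in>F. holds C (\<Theta> x) (m # snd x @ \<Lambda> x)" if F: "finite F" "F \<subseteq> p" for F
  proof -
    obtain m where "m \<in> univ N" "\<forall>(\<phi>, ds)\<in>F. holds (expN C N) \<phi> (m # ds)"
      using fs F by meson
    then show ?thesis using T F by fastforce
  qed
  have fam: "wf L (\<Theta> x) \<and> snd x \<in> lists B \<and> \<Lambda> x \<in> lists A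
      \<and> fv (\<Theta> x) \<subseteq> {..<Suc (length (snd x) + length (\<Lambda> x))}" if "x \<in> p" for x
    using T[OF that] bspec[OF p that] by (auto split: prod.splits)
  obtain c where "c \<in> univ N" "\<And>x. x \<in> p \<Longrightarrow> holds C (\<Theta> x) (c # snd x @ \<Lambda> x)"
    using realize_family_with_orthogonal_params[OF es satN satC \<kappa> \<mu> A orth B fam fs'] by blast
  then show "\<exists>a\<in>univ N. \<forall>(\<phi>, ds)\<in>p. holds (expN C N) \<phi> (a # ds)"
    using T by (intro bexI[of _ c]) fastforce+
qed
end

theorem mainTheorem4:
  fixes L :: "('f, 'r) lang" and C N :: "('u, 'f, 'r) struc" and A :: "'u set"
    and \<kappa> :: "'k rel" and \<mu> :: "'m rel"
  assumes "monster L C \<mu>"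
    and "ordLess2 (card_of (univ N)) \<mu>" and "ordLess2 (card_of A) \<mu>"
    and "dependent L C"
    and "Card_order \<kappa>" and "regularCard \<kappa>"
    and "ordLess2 (card_of {\<phi>. wf L \<phi>}) \<kappa>"
    and "elem_sub L N C" and "saturated L N \<kappa>"
    and "A \<subseteq> univ C" and "ordLess2 (card_of A) \<kappa>"
    and "\<forall>as\<in>lists A. tp L C as (univ N) \<in> S_nsp_ge L C N \<kappa>"
    and "has_qe (expL L A) (expN C N)"
  shows "saturated (expL L A) (expN C N) \<kappa>"
proof -
  have C: "Card_order \<mu>" "saturated L C \<mu>" "ordLess2 (card_of {\<phi>. wf L \<phi>}) \<mu>"
    using assms(1) by (auto simp: monster_def)
  have "\<not> finite (Field \<mu>)"
    using infinite_Field_if_nat_ordLess[OF C(1) nat_ordLess_if_formulas_ordLess[OF C(3)]] .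
  then have "ordLess2 (card_of (univ N \<union> A)) \<mu>"
    using card_of_Un_ordLess_infinite_Field C(1) assms(2,3) by blast
  then show ?thesis
    using saturated_expN[OF assms(8,9) C(2) assms(5,6) nat_ordLess_if_formulas_ordLess[OF assms(7)]
        assms(7) _ assms(10-13)] by blast
qed

end
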